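(* Let $p\in[1,\infty)$, $q\in[1,\infty]$, integers $s_1,s_2,m_1,n\ge1$, $\epsilon\in\{-1,+1\}^n$, points $x_1,\dots,x_n\in\mathbb{R}^{m_1}$ and any function $g:\mathbb{R}^{m_1}\to\mathbb{R}^{s_1}$. Then $$\sup_{0\neq V\in\mathbb{R}^{s_1\times s_2}}\frac{1}{\|V\|_{p,q}}\Big\|\sum_{i=1}^n\epsilon_i\,\sigma\circ\big(V^Tg(x_i)\big)\Big\|_{p^*}=s_2^{[\frac1{p^*}-\frac1q]_+}\sup_{0\ne v\in\mathbb{R}^{s_1}}\frac1{\|v\|_p}\Big|\sum_{i=1}^n\epsilon_i\,\sigma\big(\langle v,g(x_i)\rangle\big)\Big|.$$
   Context: $p^*\in(1,\infty]$ is defined by $1/p+1/p^*=1$; $[x]_+=\max(x,0)$. $\sigma(u)=\max(u,0)$, applied coordinatewise to vectors. For a real $s_1\times s_2$ matrix $A=(a_{ij})$: $\|A\|_{p,q}=\big(\sum_{j=1}^{s_2}(\sum_{i=1}^{s_1}|a_{ij}|^p)^{q/p}\big)^{1/q}$ for $q<\infty$, and $\|A\|_{p,\infty}=\max_j(\sum_{i}|a_{ij}|^p)^{1/p}$. *)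

theory Defs
  imports "HOL-Analysis.Analysis"
begin

text \<open>Exponents in [1,\<infinity>] are represented as extended reals.\<close>

definition relu :: "real \<Rightarrow> real" where
  "relu u = max u 0"

definition conj_exp :: "real \<Rightarrow> ereal" where
  "conj_exp p = (if p = 1 then \<infinity> else ereal (p / (p - 1)))"

definition inv_exp :: "ereal \<Rightarrow> real" where
  "inv_exp r = (if r = \<infinity> then 0 else 1 / real_of_ereal r)"

definition lpnorm :: "ereal \<Rightarrow> real ^ 'n \<Rightarrow> real" where
  "lpnorm r x = (if r = \<infinity> then Max (range (\<lambda>i. \<bar>x $ i\<bar>))
      else (\<Sum>i\<in>UNIV. \<bar>x $ i\<bar> powr real_of_ereal r) powr (1 / real_of_ereal r))"

text \<open>The (p,q) matrix norm of an s1 x s2 matrix A (rows indexed by 's1, columns by 's2):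
  the l^q norm of the vector of l^p norms of the columns.\<close>
definition matnorm :: "ereal \<Rightarrow> ereal \<Rightarrow> real ^ 's2 ^ 's1 \<Rightarrow> real" where
  "matnorm p q A = lpnorm q (\<chi> j. lpnorm p (\<chi> i. A $ i $ j))"

end

theory Submission
  imports Defs
begin

(*
  The matrix supremum decouples over columns. The j-th entry of the network output is
  f(V_j), where V_j is the j-th column of V and f v = sum_i eps_i relu(<v, g(x_i)>) is
  positively homogeneous. Hence |f(V_j)| <= C |V_j|_p with C the supremum on the right,
  and the upper bound reduces to the comparison |a|_p' <= s2^[1/p' - 1/q]_+ |a|_q of
  norms on R^s2 (p' the conjugate exponent), applied to a = (|V_j|_p)_j. Conversely,
  the rank-one matrices V = v a^T attain the bound, with a a standard basis vector or
  the all-ones vector, whichever makes the norm comparison sharp.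
*)

lemma lpnorm_ereal: "lpnorm (ereal r) x = (\<Sum>i\<in>UNIV. \<bar>x $ i\<bar> powr r) powr (1 / r)"
  by (simp add: lpnorm_def)

lemma lpnorm_infinity: "lpnorm \<infinity> x = Max (range (\<lambda>i. \<bar>x $ i\<bar>))"
  by (simp add: lpnorm_def)

lemma ereal_ge_1_cases:
  assumes "(1::ereal) \<le> r"
  obtains "r = \<infinity>" | r' where "r = ereal r'" "1 \<le> r'"
  using assms by (cases r) auto

lemma abs_component_le_lpnorm:
  fixes x :: "real ^ 'n"
  assumes "1 \<le> r"
  shows "\<bar>x $ i\<bar> \<le> lpnorm r x"
  using assms
proof (cases rule: ereal_ge_1_cases)
  case 1
  then show ?thesis by (simp add: lpnorm_infinity)
next
  case (2 r')
  have "\<bar>x $ i\<bar> powr r' \<le> (\<Sum>j\<in>UNIV. \<bar>x $ j\<bar> powr r')"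
    by (rule member_le_sum) auto
  then have "(\<bar>x $ i\<bar> powr r') powr (1/r') \<le> (\<Sum>j\<in>UNIV. \<bar>x $ j\<bar> powr r') powr (1/r')"
    using 2 by (intro powr_mono2) auto
  then show ?thesis using 2 by (simp add: lpnorm_ereal powr_powr)
qed

lemma lpnorm_nonneg: "0 \<le> lpnorm r (x :: real ^ 'n)"
proof (cases "r = \<infinity>")
  case True
  then show ?thesis
    using order_trans[OF abs_ge_zero abs_component_le_lpnorm[of \<infinity> x undefined]] by simp
qed (simp add: lpnorm_def)

lemma lpnorm_pos:
  fixes x :: "real ^ 'n"
  assumes "1 \<le> r" "x \<noteq> 0"
  shows "0 < lpnorm r x"
proof -
  obtain i where "x $ i \<noteq> 0" using assms(2) by (metis vec_eq_iff zero_index)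
  then show ?thesis using abs_component_le_lpnorm[OF assms(1), of x i] by simp
qed

lemma lpnorm_mono:
  fixes x y :: "real ^ 'n"
  assumes "1 \<le> r" "\<And>i. \<bar>x $ i\<bar> \<le> \<bar>y $ i\<bar>"
  shows "lpnorm r x \<le> lpnorm r y"
  using assms(1)
proof (cases rule: ereal_ge_1_cases)
  case 1
  have "\<bar>x $ i\<bar> \<le> Max (range (\<lambda>i. \<bar>y $ i\<bar>))" for i
    using order_trans[OF assms(2) abs_component_le_lpnorm[of \<infinity> y]] by (simp add: lpnorm_infinity)
  then show ?thesis using 1 by (simp add: lpnorm_infinity Max_le_iff)
next
  case (2 r')
  have "(\<Sum>i\<in>UNIV. \<bar>x $ i\<bar> powr r') \<le> (\<Sum>i\<in>UNIV. \<bar>y $ i\<bar> powr r')"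
    using 2 assms(2) by (intro sum_mono powr_mono2) auto
  then show ?thesis
    using 2 by (simp add: lpnorm_ereal) (rule powr_mono2, auto intro: sum_nonneg)
qed

lemma lpnorm_scaleR:
  fixes x :: "real ^ 'n"
  assumes "1 \<le> r"
  shows "lpnorm r (c *\<^sub>R x) = \<bar>c\<bar> * lpnorm r x"
  using assms
proof (cases rule: ereal_ge_1_cases)
  case 1
  obtain i0 where i0: "Max (range (\<lambda>i. \<bar>x $ i\<bar>)) = \<bar>x $ i0\<bar>"
    using Max_in[of "range (\<lambda>i. \<bar>x $ i\<bar>)"] by fastforce
  have "\<bar>x $ i\<bar> \<le> \<bar>x $ i0\<bar>" for i
    using abs_component_le_lpnorm[of \<infinity> x i] i0 by (simp add: lpnorm_infinity)
  then have "Max (range (\<lambda>i. \<bar>c * x $ i\<bar>)) = \<bar>c\<bar> * \<bar>x $ i0\<bar>"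
    by (intro antisym Max_ge) (auto simp: Max_le_iff abs_mult mult_left_mono)
  then show ?thesis using 1 i0 by (simp add: lpnorm_infinity)
next
  case (2 r')
  have "(\<Sum>i\<in>UNIV. \<bar>c * x $ i\<bar> powr r') = \<bar>c\<bar> powr r' * (\<Sum>i\<in>UNIV. \<bar>x $ i\<bar> powr r')"
    by (simp add: abs_mult powr_mult sum_distrib_left)
  then show ?thesis using 2 by (simp add: lpnorm_ereal powr_mult powr_powr)
qed

lemma lpnorm_ones:
  assumes "1 \<le> r"
  shows "lpnorm r (\<chi> i. 1 :: real ^ 'n) = real CARD('n) powr inv_exp r"
  using assms
proof (cases rule: ereal_ge_1_cases)
  case 1
  have "range (\<lambda>i::'n. 1::real) = {1}" by auto
  then show ?thesis using 1 by (simp add: lpnorm_infinity inv_exp_def)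
qed (simp add: lpnorm_ereal inv_exp_def)

lemma lpnorm_axis:
  assumes "1 \<le> r"
  shows "lpnorm r (axis k 1 :: real ^ 'n) = 1"
  using assms
proof (cases rule: ereal_ge_1_cases)
  case 1
  have "Max (range (\<lambda>i. \<bar>(axis k 1 :: real ^ 'n) $ i\<bar>)) = 1"
    by (intro antisym Max_ge) (auto simp: Max_le_iff axis_def intro!: image_eqI[where x=k])
  then show ?thesis using 1 by (simp add: lpnorm_infinity)
next
  case (2 r')
  have "(\<Sum>i\<in>UNIV. \<bar>(axis k 1 :: real ^ 'n) $ i\<bar> powr r') = (\<Sum>i\<in>UNIV. if i = k then 1 else 0)"
    by (rule sum.cong) (auto simp: axis_def)
  then show ?thesis using 2 by (simp add: lpnorm_ereal)
qed

lemma sum_le_card_powr_mul_sum_powr: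
  fixes c :: "'a \<Rightarrow> real"
  assumes "finite S" "\<And>i. i \<in> S \<Longrightarrow> 0 \<le> c i" "1 < u"
  shows "(\<Sum>i\<in>S. c i) \<le> real (card S) powr (1 - 1/u) * (\<Sum>i\<in>S. c i powr u) powr (1/u)"
proof (cases "\<forall>i\<in>S. c i = 0")
  case False
  then obtain i0 where i0: "i0 \<in> S" "c i0 \<noteq> 0" by blast
  define A where "A = (\<Sum>i\<in>S. c i powr u) powr (1/u)"
  define w where "w = u / (u - 1)"
  define B where "B = real (card S) powr (1/w)"
  have uw: "1/u + 1/w = 1" and w1: "1 < w" using assms(3) by (simp_all add: w_def field_simps)
  have N: "0 < real (card S)" using i0 assms(1) by (auto simp: card_gt_0_iff)
  have SA: "(\<Sum>i\<in>S. c i powr u) = A powr u"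
    using assms by (simp add: A_def powr_powr sum_nonneg)
  have "0 < (\<Sum>i\<in>S. c i powr u)"
    using assms i0 by (intro sum_pos2[where i=i0]) auto
  then have A: "0 < A" by (simp add: A_def)
  have B: "0 < B" "B powr w = real (card S)"
    using N w1 by (simp_all add: B_def powr_divide powr_powr)
  have "(\<Sum>i\<in>S. (c i / A) * (1/B)) \<le> (\<Sum>i\<in>S. (c i / A) powr u / u + (1/B) powr w / w)"
    using Youngs_inequality[of u w "c _ / A" "1/B"] assms A B uw w1 by (intro sum_mono) simp
  also have "\<dots> = (\<Sum>i\<in>S. c i powr u) / A powr u / u + real (card S) * (1 / real (card S)) / w"
    using A assms(2) by (simp add: B sum.distrib powr_divide sum_divide_distrib)
  also have "\<dots> = 1"
    using SA A N uw by simp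
  finally have "(\<Sum>i\<in>S. c i) \<le> A * B"
    using A B by (simp add: divide_le_eq flip: sum_divide_distrib)
  moreover have "1/w = 1 - 1/u" using uw by simp
  ultimately show ?thesis by (simp add: A_def B_def mult.commute)
qed simp

lemma lpnorm_antimono:
  fixes x :: "real ^ 'n"
  assumes "1 \<le> r" "r \<le> t"
  shows "lpnorm (ereal t) x \<le> lpnorm (ereal r) x"
proof -
  define S where "S = lpnorm (ereal r) x"
  have S: "0 \<le> S" "\<And>i. \<bar>x $ i\<bar> \<le> S"
    using abs_component_le_lpnorm[of "ereal r" x] assms by (simp_all add: S_def lpnorm_nonneg)
  have Sr: "(\<Sum>i\<in>UNIV. \<bar>x $ i\<bar> powr r) = S powr r"
    using assms by (simp add: S_def lpnorm_ereal powr_powr sum_nonneg)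
  have "(\<Sum>i\<in>UNIV. \<bar>x $ i\<bar> powr t) \<le> (\<Sum>i\<in>UNIV. \<bar>x $ i\<bar> powr r * S powr (t - r))"
  proof (rule sum_mono)
    fix i
    have "\<bar>x $ i\<bar> powr t = \<bar>x $ i\<bar> powr r * \<bar>x $ i\<bar> powr (t - r)"
      by (simp flip: powr_add)
    also have "\<dots> \<le> \<bar>x $ i\<bar> powr r * S powr (t - r)"
      using S(2)[of i] assms by (intro mult_left_mono powr_mono2) auto
    finally show "\<bar>x $ i\<bar> powr t \<le> \<bar>x $ i\<bar> powr r * S powr (t - r)" .
  qed
  also have "\<dots> = S powr t"
    by (simp add: Sr flip: sum_distrib_right powr_add)
  finally have "(\<Sum>i\<in>UNIV. \<bar>x $ i\<bar> powr t) powr (1/t) \<le> (S powr t) powr (1/t)"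
    using assms by (intro powr_mono2) (auto intro: sum_nonneg)
  also have "\<dots> = S" using assms S by (simp add: powr_powr)
  finally show ?thesis by (simp add: lpnorm_ereal S_def)
qed

lemma lpnorm_infinity_le:
  fixes x :: "real ^ 'n"
  assumes "1 \<le> r"
  shows "lpnorm \<infinity> x \<le> lpnorm r x"
  using abs_component_le_lpnorm[of r x] assms by (simp add: lpnorm_infinity Max_le_iff)

lemma lpnorm_le_card_powr_mul_lpnorm:
  fixes x :: "real ^ 'n"
  assumes "1 \<le> r" "r \<le> t"
  shows "lpnorm (ereal r) x \<le> real CARD('n) powr (1/r - 1/t) * lpnorm (ereal t) x"
proof (cases "r = t")
  case False
  then have "r < t" using assms by simp
  \<comment> \<open>the power mean inequality for the numbers |x_i|^r with exponent t/r\<close>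
  then have "(\<Sum>i\<in>UNIV. \<bar>x $ i\<bar> powr r) \<le> real CARD('n) powr (1 - 1/(t/r)) *
          (\<Sum>i\<in>UNIV. (\<bar>x $ i\<bar> powr r) powr (t/r)) powr (1/(t/r))"
    using assms by (intro sum_le_card_powr_mul_sum_powr) auto
  also have "\<dots> = real CARD('n) powr (1 - r/t) * (\<Sum>i\<in>UNIV. \<bar>x $ i\<bar> powr t) powr (r/t)"
    using assms by (simp add: powr_powr)
  finally have "(\<Sum>i\<in>UNIV. \<bar>x $ i\<bar> powr r) powr (1/r) \<le>
      (real CARD('n) powr (1 - r/t) * (\<Sum>i\<in>UNIV. \<bar>x $ i\<bar> powr t) powr (r/t)) powr (1/r)"
    using assms by (intro powr_mono2) (auto intro: sum_nonneg)
  also have "\<dots> = real CARD('n) powr ((1 - r/t) / r) * (\<Sum>i\<in>UNIV. \<bar>x $ i\<bar> powr t) powr (1/t)"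
    using assms by (simp add: powr_mult powr_powr)
  also have "(1 - r/t) / r = 1/r - 1/t" using assms by (simp add: field_simps)
  finally show ?thesis by (simp add: lpnorm_ereal)
qed simp

lemma lpnorm_le_card_powr_mul_lpnorm_infinity:
  fixes x :: "real ^ 'n"
  assumes "1 \<le> r"
  shows "lpnorm (ereal r) x \<le> real CARD('n) powr (1/r) * lpnorm \<infinity> x"
proof -
  define M where "M = lpnorm \<infinity> x"
  have M: "0 \<le> M" "\<And>i. \<bar>x $ i\<bar> \<le> M"
    using abs_component_le_lpnorm[of \<infinity> x] by (simp_all add: M_def lpnorm_nonneg)
  have "(\<Sum>i\<in>UNIV. \<bar>x $ i\<bar> powr r) \<le> (\<Sum>i\<in>(UNIV::'n set). M powr r)"
    using M assms by (intro sum_mono powr_mono2) auto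
  then have "(\<Sum>i\<in>UNIV. \<bar>x $ i\<bar> powr r) powr (1/r) \<le> (real CARD('n) * M powr r) powr (1/r)"
    using assms by (intro powr_mono2) (auto intro: sum_nonneg)
  also have "\<dots> = real CARD('n) powr (1/r) * M"
    using assms M by (simp add: powr_mult powr_powr)
  finally show ?thesis by (simp add: lpnorm_ereal M_def)
qed

lemma lpnorm_le_card_powr_pos_part_mul_lpnorm:
  fixes x :: "real ^ 'n"
  assumes "1 \<le> r" "1 \<le> t"
  shows "lpnorm r x \<le> real CARD('n) powr (max (inv_exp r - inv_exp t) 0) * lpnorm t x"
  using assms(1)
proof (cases rule: ereal_ge_1_cases)
  case 1
  with assms(2) show ?thesis
    by (cases rule: ereal_ge_1_cases) (simp_all add: inv_exp_def lpnorm_infinity_le)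
next
  case (2 r')
  from assms(2) show ?thesis
  proof (cases rule: ereal_ge_1_cases)
    case 1
    then show ?thesis
      using 2 lpnorm_le_card_powr_mul_lpnorm_infinity[of r' x] by (simp add: inv_exp_def max_def)
  next
    case (2 t')
    note r' = \<open>r = ereal r'\<close> \<open>1 \<le> r'\<close>
    show ?thesis
    proof (cases "r' \<le> t'")
      case True
      then have "1/t' \<le> 1/r'" using r' by (simp add: frac_le)
      then show ?thesis
        using True r' 2 lpnorm_le_card_powr_mul_lpnorm[of r' t' x] by (simp add: inv_exp_def)
    next
      case False
      then have "1/r' \<le> 1/t'" using 2 by (simp add: frac_le)
      then show ?thesis
        using False r' 2 lpnorm_antimono[of t' r' x] by (simp add: inv_exp_def)
    qed
  qed
qed

lemma lpnorm_le_card_powr_pos_part_mul_lpnorm_sharp: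
  assumes "1 \<le> r" "1 \<le> t"
  obtains a :: "real ^ 'n" where "\<And>j. 0 \<le> a $ j" "a \<noteq> 0"
    "real CARD('n) powr (max (inv_exp r - inv_exp t) 0) * lpnorm t a \<le> lpnorm r a"
proof (cases "inv_exp r \<le> inv_exp t")
  case True
  have "0 \<le> (axis undefined 1 :: real ^ 'n) $ j" for j by (simp add: axis_def)
  then show ?thesis
    using True assms by (intro that[of "axis undefined 1"]) (simp_all add: lpnorm_axis)
next
  case False
  have "real CARD('n) powr (inv_exp r - inv_exp t) * real CARD('n) powr inv_exp t
      = real CARD('n) powr inv_exp r" by (simp flip: powr_add)
  then show ?thesis
    using False assms by (intro that[of "\<chi> i. 1"]) (auto simp: lpnorm_ones vec_eq_iff max_def)
qed

lemma lpnorm_zero: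
  assumes "1 \<le> r"
  shows "lpnorm r (0 :: real ^ 'n) = 0"
  using lpnorm_scaleR[OF assms, of 0 0] by simp

lemma abs_le_SUP_ratio_mul_lpnorm:
  fixes f :: "real ^ 'n \<Rightarrow> real"
  assumes "1 \<le> p" "f 0 = 0" "bdd_above ((\<lambda>v. \<bar>f v\<bar> / lpnorm p v) ` {v. v \<noteq> 0})"
  shows "\<bar>f v\<bar> \<le> (SUP u \<in> {u. u \<noteq> 0}. \<bar>f u\<bar> / lpnorm p u) * lpnorm p v"
proof (cases "v = 0")
  case False
  have "\<bar>f v\<bar> / lpnorm p v \<le> (SUP u \<in> {u. u \<noteq> 0}. \<bar>f u\<bar> / lpnorm p u)"
    using False by (intro cSUP_upper[OF _ assms(3)]) auto
  then show ?thesis using lpnorm_pos[OF assms(1) False] by (simp add: divide_le_eq)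
qed (simp add: assms lpnorm_zero)

lemma lpnorm_columns_le:
  fixes V :: "real ^ 's ^ 'k" and f :: "real ^ 'k \<Rightarrow> real"
  assumes "1 \<le> r" "1 \<le> q" "0 \<le> C" "\<And>v. \<bar>f v\<bar> \<le> C * lpnorm p v"
  shows "lpnorm r (\<chi> j. f (column j V))
    \<le> real CARD('s) powr (max (inv_exp r - inv_exp q) 0) * C * lpnorm q (\<chi> j. lpnorm p (column j V))"
proof -
  have "lpnorm r (\<chi> j. f (column j V)) \<le> lpnorm r (C *\<^sub>R (\<chi> j. lpnorm p (column j V)))"
    using assms(3,4) by (intro lpnorm_mono[OF assms(1)]) (simp add: abs_mult lpnorm_nonneg)
  also have "\<dots> = C * lpnorm r (\<chi> j. lpnorm p (column j V))"
    using assms(3) by (simp add: lpnorm_scaleR[OF assms(1)])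
  also have "\<dots> \<le> C * (real CARD('s) powr (max (inv_exp r - inv_exp q) 0)
      * lpnorm q (\<chi> j. lpnorm p (column j V)))"
    using assms(3) by (intro mult_left_mono lpnorm_le_card_powr_pos_part_mul_lpnorm assms(1,2))
  finally show ?thesis by (simp add: mult_ac)
qed

lemma lpnorm_column_norms_pos:
  fixes V :: "real ^ 's ^ 'k"
  assumes "1 \<le> p" "1 \<le> q" "V \<noteq> 0"
  shows "0 < lpnorm q (\<chi> j. lpnorm p (column j V))"
proof -
  obtain k j where "V $ k $ j \<noteq> 0" using assms(3) by (metis vec_eq_iff zero_index)
  then have "column j V \<noteq> 0" by (auto simp: column_def vec_eq_iff)
  then have "(\<chi> j. lpnorm p (column j V)) $ j \<noteq> 0"
    using lpnorm_pos[OF assms(1)] by force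
  then have "(\<chi> j. lpnorm p (column j V)) \<noteq> 0" by (metis zero_index)
  then show ?thesis by (rule lpnorm_pos[OF assms(2)])
qed

lemma outer_ne_zero:
  fixes v :: "real ^ 'k" and a :: "real ^ 's"
  assumes "v \<noteq> 0" "a \<noteq> 0"
  shows "(\<chi> k j. v $ k * a $ j) \<noteq> 0"
proof -
  obtain j where "a $ j \<noteq> 0" using assms(2) by (metis vec_eq_iff zero_index)
  moreover obtain k where "v $ k \<noteq> 0" using assms(1) by (metis vec_eq_iff zero_index)
  ultimately have "(\<chi> k j. v $ k * a $ j) $ k $ j \<noteq> 0" by simp
  then show ?thesis by (metis zero_index)
qed

lemma lpnorm_columns_ratio_outer:
  fixes f :: "real ^ 'k \<Rightarrow> real" and a :: "real ^ 's"
  assumes r: "1 \<le> r" and q: "1 \<le> q" and p: "1 \<le> p"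
    and hom: "\<And>c v. 0 \<le> c \<Longrightarrow> f (c *\<^sub>R v) = c * f v"
    and a: "\<And>j. 0 \<le> a $ j"
  shows "lpnorm r (\<chi> j. f (column j (\<chi> k j. v $ k * a $ j)))
           / lpnorm q (\<chi> j. lpnorm p (column j (\<chi> k j. v $ k * a $ j)))
    = \<bar>f v\<bar> * lpnorm r a / (lpnorm p v * lpnorm q a)"
proof -
  have column: "column j (\<chi> k j. v $ k * a $ j) = a $ j *\<^sub>R v" for j
    by (simp add: column_def vec_eq_iff mult.commute)
  have "(\<chi> j. f (column j (\<chi> k j. v $ k * a $ j))) = f v *\<^sub>R a"
    "(\<chi> j. lpnorm p (column j (\<chi> k j. v $ k * a $ j))) = lpnorm p v *\<^sub>R a"
    using a by (simp_all add: column hom lpnorm_scaleR[OF p] vec_eq_iff mult.commute)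
  then show ?thesis
    by (simp add: lpnorm_scaleR[OF r] lpnorm_scaleR[OF q] lpnorm_nonneg)
qed

lemma nonzero_vectors_nonempty: "{x :: real ^ 'n. x \<noteq> 0} \<noteq> {}"
  by (metis (mono_tags) empty_Collect_eq vec_eq_iff zero_index zero_neq_one vec_lambda_beta)

lemma SUP_lpnorm_columns_ratio:
  fixes f :: "real ^ 'k \<Rightarrow> real"
  assumes r: "1 \<le> r" and q: "1 \<le> q" and p: "1 \<le> p"
    and hom: "\<And>c v. 0 \<le> c \<Longrightarrow> f (c *\<^sub>R v) = c * f v"
    and bdd: "bdd_above ((\<lambda>v. \<bar>f v\<bar> / lpnorm p v) ` {v. v \<noteq> 0})"
  shows "(SUP V \<in> {V :: real ^ 's ^ 'k. V \<noteq> 0}.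
           lpnorm r (\<chi> j. f (column j V)) / lpnorm q (\<chi> j. lpnorm p (column j V)))
    = real CARD('s) powr (max (inv_exp r - inv_exp q) 0) * (SUP v \<in> {v. v \<noteq> 0}. \<bar>f v\<bar> / lpnorm p v)"
    (is "(SUP V \<in> _. ?L V) = ?s * ?C")
proof -
  have f0: "f 0 = 0" using hom[of 0 0] by simp
  have s: "0 < ?s" by simp
  have C: "0 \<le> ?C"
    using nonzero_vectors_nonempty by (intro cSUP_upper2[OF bdd]) (auto simp: lpnorm_nonneg)
  have upper: "?L V \<le> ?s * ?C" if "V \<noteq> 0" for V :: "real ^ 's ^ 'k"
    using lpnorm_columns_le[OF r q C abs_le_SUP_ratio_mul_lpnorm[OF p f0 bdd], of V]
      lpnorm_column_norms_pos[OF p q that]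
    by (simp add: divide_le_eq mult_ac)
  have bddL: "bdd_above (?L ` {V. V \<noteq> 0})"
    using upper by (intro bdd_aboveI2) auto
  obtain a :: "real ^ 's" where a: "\<And>j. 0 \<le> a $ j" "a \<noteq> 0" "?s * lpnorm q a \<le> lpnorm r a"
    using lpnorm_le_card_powr_pos_part_mul_lpnorm_sharp[OF r q] by blast
  have lower: "?s * (\<bar>f v\<bar> / lpnorm p v) \<le> (SUP V \<in> {V. V \<noteq> 0}. ?L V)" if "v \<noteq> 0" for v
  proof -
    have v: "0 < lpnorm p v" and a': "0 < lpnorm q a" using lpnorm_pos p q that a(2) by auto
    have LW: "?L (\<chi> k j. v $ k * a $ j) = \<bar>f v\<bar> * lpnorm r a / (lpnorm p v * lpnorm q a)"
      by (rule lpnorm_columns_ratio_outer[OF r q p hom a(1)])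
    have "?s * (\<bar>f v\<bar> / lpnorm p v) = \<bar>f v\<bar> * (?s * lpnorm q a) / (lpnorm p v * lpnorm q a)"
      using a' by (simp add: field_simps)
    also have "\<dots> \<le> ?L (\<chi> k j. v $ k * a $ j)"
      unfolding LW
      using a(3) v a' by (intro divide_right_mono mult_left_mono) auto
    also have "\<dots> \<le> (SUP V \<in> {V. V \<noteq> 0}. ?L V)"
      using outer_ne_zero[OF that a(2)] by (intro cSUP_upper[OF _ bddL]) auto
    finally show ?thesis .
  qed
  have "?C \<le> (SUP V \<in> {V. V \<noteq> 0}. ?L V) / ?s"
    using nonzero_vectors_nonempty lower s by (intro cSUP_least) (auto simp: le_divide_eq mult.commute)
  then have "?s * ?C \<le> (SUP V \<in> {V. V \<noteq> 0}. ?L V)"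
    using s by (simp add: le_divide_eq mult.commute)
  moreover have "(SUP V \<in> {V. V \<noteq> 0}. ?L V) \<le> ?s * ?C"
    using nonzero_vectors_nonempty upper by (intro cSUP_least) auto
  ultimately show ?thesis by linarith
qed

lemma conj_exp_ge_1: "1 \<le> p \<Longrightarrow> 1 \<le> conj_exp p"
  by (auto simp: conj_exp_def field_simps)

lemma relu_mult_nonneg: "0 \<le> c \<Longrightarrow> relu (c * u) = c * relu u"
  by (auto simp: relu_def max_def mult_le_0_iff zero_le_mult_iff)

lemma abs_inner_le_lpnorm_mul_sum_abs:
  fixes v y :: "real ^ 'n"
  assumes "1 \<le> p"
  shows "\<bar>v \<bullet> y\<bar> \<le> lpnorm p v * (\<Sum>k\<in>UNIV. \<bar>y $ k\<bar>)"
proof -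
  have "\<bar>v \<bullet> y\<bar> \<le> (\<Sum>k\<in>UNIV. \<bar>v $ k\<bar> * \<bar>y $ k\<bar>)"
    unfolding inner_vec_def by (rule order_trans[OF sum_abs]) (simp add: abs_mult)
  also have "\<dots> \<le> (\<Sum>k\<in>UNIV. lpnorm p v * \<bar>y $ k\<bar>)"
    using abs_component_le_lpnorm[OF assms, of v] by (intro sum_mono mult_right_mono) auto
  finally show ?thesis by (simp add: sum_distrib_left)
qed

lemma bdd_above_relu_sum_ratio:
  fixes y :: "'i \<Rightarrow> real ^ 'n"
  assumes "1 \<le> p"
  shows "bdd_above ((\<lambda>v. \<bar>\<Sum>i\<in>I. c i * relu (v \<bullet> y i)\<bar> / lpnorm p v) ` {v. v \<noteq> 0})"
proof (rule bdd_aboveI2)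
  fix v :: "real ^ 'n"
  assume "v \<in> {v. v \<noteq> 0}"
  then have v: "0 < lpnorm p v" using lpnorm_pos[OF assms] by auto
  have "\<bar>\<Sum>i\<in>I. c i * relu (v \<bullet> y i)\<bar> \<le> (\<Sum>i\<in>I. \<bar>c i\<bar> * (lpnorm p v * (\<Sum>k\<in>UNIV. \<bar>y i $ k\<bar>)))"
  proof (rule order_trans[OF sum_abs sum_mono])
    fix i
    have "\<bar>relu (v \<bullet> y i)\<bar> \<le> lpnorm p v * (\<Sum>k\<in>UNIV. \<bar>y i $ k\<bar>)"
      using abs_inner_le_lpnorm_mul_sum_abs[OF assms, of v "y i"] by (auto simp: relu_def)
    then show "\<bar>c i * relu (v \<bullet> y i)\<bar> \<le> \<bar>c i\<bar> * (lpnorm p v * (\<Sum>k\<in>UNIV. \<bar>y i $ k\<bar>))"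
      by (simp add: abs_mult mult_left_mono)
  qed
  then show "\<bar>\<Sum>i\<in>I. c i * relu (v \<bullet> y i)\<bar> / lpnorm p v \<le> (\<Sum>i\<in>I. \<bar>c i\<bar> * (\<Sum>k\<in>UNIV. \<bar>y i $ k\<bar>))"
    using v by (simp add: divide_le_eq sum_distrib_left sum_distrib_right mult_ac)
qed

theorem mainTheorem7:
  fixes p :: real and q :: ereal and n :: nat
    and eps :: "nat \<Rightarrow> real"
    and x :: "nat \<Rightarrow> real ^ 'm1"
    and g :: "real ^ 'm1 \<Rightarrow> real ^ 's1"
  assumes "1 \<le> p" and "1 \<le> q" and "1 \<le> n"
    and "\<forall>i\<in>{1..n}. eps i \<in> {-1, 1}"
  shows "(SUP V \<in> {V :: real ^ 's2 ^ 's1. V \<noteq> 0}.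
            lpnorm (conj_exp p)
              (\<Sum>i = 1..n. eps i *\<^sub>R (\<chi> j. relu ((transpose V *v g (x i)) $ j)))
            / matnorm (ereal p) q V)
         = real CARD('s2) powr (max (inv_exp (conj_exp p) - inv_exp q) 0)
           * (SUP v \<in> {v :: real ^ 's1. v \<noteq> 0}.
                \<bar>\<Sum>i = 1..n. eps i * relu (v \<bullet> g (x i))\<bar> / lpnorm (ereal p) v)"
proof -
  define f where "f v = (\<Sum>i = 1..n. eps i * relu (v \<bullet> g (x i)))" for v :: "real ^ 's1"
  have hom: "\<And>c v. 0 \<le> c \<Longrightarrow> f (c *\<^sub>R v) = c * f v"
    by (simp add: f_def relu_mult_nonneg sum_distrib_left mult_ac)
  have network: "(\<Sum>i = 1..n. eps i *\<^sub>R (\<chi> j. relu ((transpose V *v g (x i)) $ j)))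
      = (\<chi> j. f (column j V))" for V :: "real ^ 's2 ^ 's1"
    by (simp add: f_def vec_eq_iff sum_component matrix_vector_mult_def transpose_def
        inner_vec_def column_def)
  have p: "1 \<le> ereal p" using \<open>1 \<le> p\<close> by simp
  have bdd: "bdd_above ((\<lambda>v. \<bar>f v\<bar> / lpnorm (ereal p) v) ` {v. v \<noteq> 0})"
    unfolding f_def by (rule bdd_above_relu_sum_ratio[OF p])
  have columns: "matnorm (ereal p) q V = lpnorm q (\<chi> j. lpnorm (ereal p) (column j V))" for V
    by (simp add: matnorm_def column_def)
  show ?thesis
    unfolding network columns
    using SUP_lpnorm_columns_ratio[where 's='s2, OF conj_exp_ge_1[OF \<open>1 \<le> p\<close>] \<open>1 \<le> q\<close> p hom bdd]
    by (simp only: f_def)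
qed

end
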